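(* For $n\ge1$ and $1\le\ell\le n$ let $\mathcal{A}^{\mathrm{s\text{-}ind}}_{n,\ell}$ be the set of permutations $\sigma$ of $\{1,\dots,n\}$ avoiding $1324$ and $1423$ that are skew-indecomposable and satisfy $\sigma(\ell)=1$, and let $a_{n,\ell}=\lvert\mathcal{A}^{\mathrm{s\text{-}ind}}_{n,\ell}\rvert$. Then $a_{1,1}=1$, $a_{2,1}=1$, and for $n\ge3$, \[ a_{n,\ell}=2a_{n-1,\ell}+\sum_{j=1}^{\ell-1}a_{n-1,j}\quad\text{for }1\le\ell\le n-1. \] Moreover, the generating function $g(x,u)=\sum_{n=1}^\infty\sum_{\ell=1}^n a_{n,\ell}u^\ell x^n$ satisfies \[ g(x,u)=\frac{ux\Big[4u-3+4x-3ux-\sqrt{1-6ux+u^2x^2}\Big]}{4\big(u-1-ux+2x\big)}. \]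
   Context: A permutation avoids a pattern $p$ if no subsequence of its one-line notation is order-isomorphic to $p$. For permutations $\pi$ of size $m$ and $\tau$ of size $r$, the skew sum $\pi\ominus\tau$ is the permutation of size $m+r$ whose first $m$ entries are $\pi(i)+r$ and whose last $r$ entries are $\tau(j)$. A permutation is skew-decomposable if it equals $\pi\ominus\tau$ for nonempty $\pi,\tau$, and skew-indecomposable otherwise. Note that $a_{n,n}=0$ for $n\ge2$. *)

theory Defs
  imports "HOL-Combinatorics.Permutations" Complex_Main
begin

text \<open>Permutations of size n are functions sigma with sigma permutes {1..n};
  sigma i is the i-th entry of the one-line notation (1-based).
  Patterns are given by their one-line notation as lists (entry i+1 is p!i).\<close>

definition contains_pattern :: "nat \<Rightarrow> (nat \<Rightarrow> nat) \<Rightarrow> nat list \<Rightarrow> bool" where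
  "contains_pattern n \<sigma> p \<longleftrightarrow>
     (\<exists>\<iota> :: nat \<Rightarrow> nat.
        (\<forall>i < length p. \<iota> i \<in> {1..n}) \<and>
        (\<forall>i j. i < j \<longrightarrow> j < length p \<longrightarrow> \<iota> i < \<iota> j) \<and>
        (\<forall>i < length p. \<forall>j < length p. \<sigma> (\<iota> i) < \<sigma> (\<iota> j) \<longleftrightarrow> p ! i < p ! j))"

definition avoids_pattern :: "nat \<Rightarrow> (nat \<Rightarrow> nat) \<Rightarrow> nat list \<Rightarrow> bool" where
  "avoids_pattern n \<sigma> p \<longleftrightarrow> \<not> contains_pattern n \<sigma> p"

definition skew_sum :: "nat \<Rightarrow> (nat \<Rightarrow> nat) \<Rightarrow> nat \<Rightarrow> (nat \<Rightarrow> nat) \<Rightarrow> (nat \<Rightarrow> nat)" where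
  "skew_sum m \<pi> r \<tau> = (\<lambda>i. if i \<in> {1..m} then \<pi> i + r
                            else if i \<in> {m+1..m+r} then \<tau> (i - m) else i)"

definition skew_decomposable :: "nat \<Rightarrow> (nat \<Rightarrow> nat) \<Rightarrow> bool" where
  "skew_decomposable n \<sigma> \<longleftrightarrow>
     (\<exists>m r \<pi> \<tau>. m \<ge> 1 \<and> r \<ge> 1 \<and> m + r = n \<and> \<pi> permutes {1..m} \<and> \<tau> permutes {1..r}
                \<and> \<sigma> = skew_sum m \<pi> r \<tau>)"

definition skew_indecomposable :: "nat \<Rightarrow> (nat \<Rightarrow> nat) \<Rightarrow> bool" where
  "skew_indecomposable n \<sigma> \<longleftrightarrow> \<not> skew_decomposable n \<sigma>"

definition A_sind :: "nat \<Rightarrow> nat \<Rightarrow> (nat \<Rightarrow> nat) set" where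
  "A_sind n l = {\<sigma>. \<sigma> permutes {1..n} \<and> avoids_pattern n \<sigma> [1,3,2,4] \<and> avoids_pattern n \<sigma> [1,4,2,3]
                   \<and> skew_indecomposable n \<sigma> \<and> \<sigma> l = 1}"

definition a_sind :: "nat \<Rightarrow> nat \<Rightarrow> nat" where
  "a_sind n l = card (A_sind n l)"

end

theory Submission
  imports Defs
begin

text \<open>Let \<open>\<sigma> \<in> A_sind n l\<close> with \<open>n \<ge> 3\<close> and \<open>l < n\<close>. If its entry \<open>2\<close> sat at a position
  \<open>p\<close> with \<open>l + 1 < p < n\<close>, the entries \<open>1, \<sigma> (l + 1), 2, \<sigma> n\<close> would form 1324 or 1423.
  So the \<open>2\<close> lies left of the \<open>1\<close>, directly right of it, or (if \<open>l + 1 < n\<close>) last. In the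
  first two cases deleting the \<open>1\<close> is a bijection onto the union of the \<open>A_sind (n - 1) j\<close>,
  \<open>j \<le> l\<close>; in the last case deleting the final \<open>2\<close> is a bijection onto \<open>A_sind (n - 1) l\<close>.
  Skew-indecomposability survives both operations because a skew splitting point always lies
  before the position of the \<open>1\<close>.

  For the row polynomials \<open>G n u = (\<Sum>l. a n l * u ^ l)\<close> the recurrence becomes
  \<open>(1 - u) G n u = (2 - u) G (n - 1) u - u ^ n G (n - 1) 1\<close>, hence the functional equation
  \<open>g x u ((1 - u) - (2 - u) x) = (1 - u) u x (1 - x) - u x g (u x) 1\<close>. The kernel method
  determines \<open>g y 1 = (1 + y - sqrt (1 - 6 y + y\<^sup>2)) / 4\<close>, and substituting back gives the
  closed form. The bound \<open>a n l \<le> 3 ^ n * 2 ^ l\<close> makes all series converge near the origin.\<close>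

section \<open>Deleting and inserting an entry\<close>

definition lower_above :: "nat \<Rightarrow> nat \<Rightarrow> nat" where
  "lower_above v w = (if v < w then w - 1 else w)"

definition raise_from :: "nat \<Rightarrow> nat \<Rightarrow> nat" where
  "raise_from v w = (if v \<le> w then w + 1 else w)"

definition skip_index :: "nat \<Rightarrow> nat \<Rightarrow> nat" where
  "skip_index q i = (if i < q then i else Suc i)"

definition delete_entry :: "nat \<Rightarrow> nat \<Rightarrow> (nat \<Rightarrow> nat) \<Rightarrow> nat \<Rightarrow> nat" where
  "delete_entry n q \<sigma> =
     (\<lambda>i. if i \<in> {1..n-1} then lower_above (\<sigma> q) (\<sigma> (skip_index q i)) else i)"

definition insert_entry :: "nat \<Rightarrow> nat \<Rightarrow> nat \<Rightarrow> (nat \<Rightarrow> nat) \<Rightarrow> nat \<Rightarrow> nat" where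
  "insert_entry n q v \<tau> =
     (\<lambda>i. if i \<notin> {1..n} then i else if i = q then v
          else raise_from v (\<tau> (if i < q then i else i - 1)))"

lemma lower_above_less_iff:
  "a \<noteq> v \<Longrightarrow> b \<noteq> v \<Longrightarrow> lower_above v a < lower_above v b \<longleftrightarrow> a < b"
  unfolding lower_above_def by auto

lemma lower_above_eq_iff:
  "a \<noteq> v \<Longrightarrow> b \<noteq> v \<Longrightarrow> lower_above v a = lower_above v b \<longleftrightarrow> a = b"
  unfolding lower_above_def by auto

lemma raise_from_eq_iff [simp]: "raise_from v a = raise_from v b \<longleftrightarrow> a = b"
  unfolding raise_from_def by auto

lemma raise_from_neq [simp]: "raise_from v a \<noteq> v"
  unfolding raise_from_def by auto

lemma lower_above_raise_from [simp]: "lower_above v (raise_from v w) = w"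
  unfolding raise_from_def lower_above_def by auto

lemma raise_from_lower_above: "w \<noteq> v \<Longrightarrow> raise_from v (lower_above v w) = w"
  unfolding raise_from_def lower_above_def by auto

lemma skip_index_less_iff [simp]: "skip_index q i < skip_index q j \<longleftrightarrow> i < j"
  unfolding skip_index_def by auto

lemma skip_index_eq_iff [simp]: "skip_index q i = skip_index q j \<longleftrightarrow> i = j"
  unfolding skip_index_def by auto

lemma skip_index_neq [simp]: "skip_index q i \<noteq> q"
  unfolding skip_index_def by auto

lemma permutes_eq_iff: "\<sigma> permutes S \<Longrightarrow> \<sigma> i = \<sigma> j \<longleftrightarrow> i = j"
  by (simp add: permutes_inj inj_eq)

lemma delete_entry_in:
  "i \<in> {1..n-1} \<Longrightarrow> delete_entry n q \<sigma> i = lower_above (\<sigma> q) (\<sigma> (skip_index q i))"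
  unfolding delete_entry_def by (simp del: atLeastAtMost_iff)

lemma delete_entry_out: "i \<notin> {1..n-1} \<Longrightarrow> delete_entry n q \<sigma> i = i"
  unfolding delete_entry_def by (simp del: atLeastAtMost_iff)

lemma insert_entry_at: "q \<in> {1..n} \<Longrightarrow> insert_entry n q v \<tau> q = v"
  unfolding insert_entry_def by (simp del: atLeastAtMost_iff)

lemma insert_entry_other:
  "i \<in> {1..n} \<Longrightarrow> i \<noteq> q \<Longrightarrow> insert_entry n q v \<tau> i = raise_from v (\<tau> (if i < q then i else i - 1))"
  unfolding insert_entry_def by (simp del: atLeastAtMost_iff)

lemma insert_entry_out: "i \<notin> {1..n} \<Longrightarrow> insert_entry n q v \<tau> i = i"
  unfolding insert_entry_def by (simp del: atLeastAtMost_iff)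

lemma delete_entry_permutes:
  assumes \<sigma>: "\<sigma> permutes {1..n}" and q: "q \<in> {1..n}"
  shows "delete_entry n q \<sigma> permutes {1..n-1}"
proof (rule inj_imp_permutes)
  have ne: "\<sigma> (skip_index q i) \<noteq> \<sigma> q" for i
    using permutes_eq_iff[OF \<sigma>] by simp
  show "delete_entry n q \<sigma> i \<in> {1..n-1}" if i: "i \<in> {1..n-1}" for i
  proof -
    have "skip_index q i \<in> {1..n}" using i unfolding skip_index_def by auto
    then have "\<sigma> (skip_index q i) \<in> {1..n}" using permutes_in_image[OF \<sigma>] by blast
    moreover have "\<sigma> q \<in> {1..n}" using permutes_in_image[OF \<sigma>] q by blast
    ultimately show ?thesis using i ne[of i] by (auto simp: delete_entry_in lower_above_def)
  qed
  show "inj_on (delete_entry n q \<sigma>) {1..n-1}"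
    by (rule inj_onI) (simp add: delete_entry_in lower_above_eq_iff[OF ne ne] permutes_eq_iff[OF \<sigma>])
qed (auto simp: delete_entry_out)

lemma insert_entry_permutes:
  assumes \<tau>: "\<tau> permutes {1..n-1}" and q: "q \<in> {1..n}" and v: "v \<in> {1..n}"
  shows "insert_entry n q v \<tau> permutes {1..n}"
proof (rule inj_imp_permutes)
  have idx: "(if i < q then i else i - 1) \<in> {1..n-1}" if "i \<in> {1..n}" "i \<noteq> q" for i
    using that q by auto
  show "insert_entry n q v \<tau> i \<in> {1..n}" if i: "i \<in> {1..n}" for i
  proof (cases "i = q")
    case False
    then have "\<tau> (if i < q then i else i - 1) \<in> {1..n-1}"
      using permutes_in_image[OF \<tau>] idx[OF i] by blast
    then show ?thesis using i False by (auto simp: insert_entry_other raise_from_def)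
  qed (use v q in \<open>simp add: insert_entry_at\<close>)
  show "inj_on (insert_entry n q v \<tau>) {1..n}"
  proof (rule inj_onI)
    fix i j assume i: "i \<in> {1..n}" and j: "j \<in> {1..n}"
      and eq: "insert_entry n q v \<tau> i = insert_entry n q v \<tau> j"
    show "i = j"
    proof (cases "i = q \<or> j = q")
      case True
      have "insert_entry n q v \<tau> k = v \<longleftrightarrow> k = q" if "k \<in> {1..n}" for k
        using that q by (cases "k = q") (simp_all add: insert_entry_at insert_entry_other)
      then show ?thesis using True eq i j by metis
    next
      case False
      then have "(if i < q then i else i - 1) = (if j < q then j else j - 1)"
        using eq i j by (simp add: insert_entry_other permutes_eq_iff[OF \<tau>])
      then show ?thesis using False i j by (auto split: if_splits)
    qed
  qed
qed (auto simp: insert_entry_out)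

lemma insert_delete_entry:
  assumes \<sigma>: "\<sigma> permutes {1..n}" and q: "q \<in> {1..n}"
  shows "insert_entry n q (\<sigma> q) (delete_entry n q \<sigma>) = \<sigma>"
proof
  fix i
  show "insert_entry n q (\<sigma> q) (delete_entry n q \<sigma>) i = \<sigma> i"
  proof (cases "i \<in> {1..n} \<and> i \<noteq> q")
    case True
    then have "(if i < q then i else i - 1) \<in> {1..n-1}"
      and "skip_index q (if i < q then i else i - 1) = i"
      using q by (auto simp: skip_index_def)
    then show ?thesis using True
      by (simp add: insert_entry_other delete_entry_in raise_from_lower_above permutes_eq_iff[OF \<sigma>])
  qed (use q permutes_not_in[OF \<sigma>] in \<open>auto simp: insert_entry_at insert_entry_out\<close>)
qed

lemma delete_insert_entry:
  assumes \<tau>: "\<tau> permutes {1..n-1}" and q: "q \<in> {1..n}"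
  shows "delete_entry n q (insert_entry n q v \<tau>) = \<tau>"
proof
  fix i
  show "delete_entry n q (insert_entry n q v \<tau>) i = \<tau> i"
  proof (cases "i \<in> {1..n-1}")
    case True
    then have "skip_index q i \<in> {1..n}" "skip_index q i \<noteq> q"
      and "(if skip_index q i < q then skip_index q i else skip_index q i - 1) = i"
      by (auto simp: skip_index_def)
    then show ?thesis using True q by (simp add: delete_entry_in insert_entry_other insert_entry_at)
  qed (simp add: delete_entry_out permutes_not_in[OF \<tau>])
qed

definition pattern_occurrence :: "nat \<Rightarrow> (nat \<Rightarrow> nat) \<Rightarrow> nat list \<Rightarrow> (nat \<Rightarrow> nat) \<Rightarrow> bool" where
  "pattern_occurrence n \<sigma> p \<iota> \<longleftrightarrow>
     (\<forall>i < length p. \<iota> i \<in> {1..n}) \<and>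
     (\<forall>i j. i < j \<longrightarrow> j < length p \<longrightarrow> \<iota> i < \<iota> j) \<and>
     (\<forall>i < length p. \<forall>j < length p. \<sigma> (\<iota> i) < \<sigma> (\<iota> j) \<longleftrightarrow> p ! i < p ! j)"

lemma pattern_occurrenceD:
  assumes "pattern_occurrence n \<sigma> p \<iota>"
  shows "i < length p \<Longrightarrow> \<iota> i \<in> {1..n}"
    and "i < j \<Longrightarrow> j < length p \<Longrightarrow> \<iota> i < \<iota> j"
    and "i < length p \<Longrightarrow> j < length p \<Longrightarrow> \<sigma> (\<iota> i) < \<sigma> (\<iota> j) \<longleftrightarrow> p ! i < p ! j"
  using assms unfolding pattern_occurrence_def by blast+

lemma contains_pattern_iff_occurrence:
  "contains_pattern n \<sigma> p \<longleftrightarrow> (\<exists>\<iota>. pattern_occurrence n \<sigma> p \<iota>)"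
  unfolding contains_pattern_def pattern_occurrence_def ..

lemma pattern_occurrence_delete_entry:
  assumes \<sigma>: "\<sigma> permutes {1..n}" and occ: "pattern_occurrence (n - 1) (delete_entry n q \<sigma>) p \<iota>"
  shows "pattern_occurrence n \<sigma> p (skip_index q \<circ> \<iota>)"
proof -
  have range: "\<iota> i \<in> {1..n-1}" and
    cmp: "delete_entry n q \<sigma> (\<iota> i) < delete_entry n q \<sigma> (\<iota> j) \<longleftrightarrow> p ! i < p ! j"
    if "i < length p" "j < length p" for i j
    using occ that unfolding pattern_occurrence_def by auto
  have ne: "\<sigma> (skip_index q k) \<noteq> \<sigma> q" for k
    using permutes_eq_iff[OF \<sigma>] by simp
  show ?thesis
    unfolding pattern_occurrence_def
  proof (intro conjI allI impI)
    fix i j assume i: "i < length p" and j: "j < length p"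
    show "\<sigma> ((skip_index q \<circ> \<iota>) i) < \<sigma> ((skip_index q \<circ> \<iota>) j) \<longleftrightarrow> p ! i < p ! j"
      using cmp[OF i j] range[OF i i] range[OF j j]
      by (simp add: delete_entry_in lower_above_less_iff[OF ne ne])
  next
    fix i assume "i < length p"
    then show "(skip_index q \<circ> \<iota>) i \<in> {1..n}"
      using range[of i i] unfolding skip_index_def by auto
  qed (use occ in \<open>simp add: pattern_occurrence_def\<close>)
qed

lemma contains_pattern_delete_entry:
  "\<sigma> permutes {1..n} \<Longrightarrow> contains_pattern (n - 1) (delete_entry n q \<sigma>) p \<Longrightarrow> contains_pattern n \<sigma> p"
  using pattern_occurrence_delete_entry unfolding contains_pattern_iff_occurrence by blast

lemma contains_pattern_delete_entryI:
  assumes \<sigma>: "\<sigma> permutes {1..n}" and q: "q \<in> {1..n}" and occ: "pattern_occurrence n \<sigma> p \<iota>"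
    and avoids_q: "\<forall>i < length p. \<iota> i \<noteq> q"
  shows "contains_pattern (n - 1) (delete_entry n q \<sigma>) p"
proof -
  define \<kappa> where "\<kappa> i = (if \<iota> i < q then \<iota> i else \<iota> i - 1)" for i
  have skip: "skip_index q (\<kappa> i) = \<iota> i" if "i < length p" for i
    using avoids_q that unfolding \<kappa>_def skip_index_def by auto
  have range: "\<kappa> i \<in> {1..n-1}" if "i < length p" for i
  proof -
    have "\<iota> i \<in> {1..n}" "\<iota> i \<noteq> q" using avoids_q occ that unfolding pattern_occurrence_def by auto
    then show ?thesis using q unfolding \<kappa>_def by auto
  qed
  have "pattern_occurrence (n - 1) (delete_entry n q \<sigma>) p \<kappa>"
    unfolding pattern_occurrence_def
  proof (intro conjI allI impI)
    fix i j assume "i < j" "j < length p"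
    then show "\<kappa> i < \<kappa> j"
      using occ skip[of i] skip[of j] skip_index_less_iff[of q "\<kappa> i" "\<kappa> j"]
      unfolding pattern_occurrence_def by simp
  next
    fix i j assume i: "i < length p" and j: "j < length p"
    have ne: "\<sigma> (\<iota> i) \<noteq> \<sigma> q" "\<sigma> (\<iota> j) \<noteq> \<sigma> q"
      using avoids_q i j permutes_eq_iff[OF \<sigma>] by auto
    show "delete_entry n q \<sigma> (\<kappa> i) < delete_entry n q \<sigma> (\<kappa> j) \<longleftrightarrow> p ! i < p ! j"
      using occ i j unfolding pattern_occurrence_def
      by (simp add: delete_entry_in[OF range[OF i]] delete_entry_in[OF range[OF j]] skip
          lower_above_less_iff[OF ne])
  qed (use range in simp)
  then show ?thesis unfolding contains_pattern_iff_occurrence by blast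
qed

section \<open>Skew decompositions\<close>

definition skew_split :: "nat \<Rightarrow> (nat \<Rightarrow> nat) \<Rightarrow> nat \<Rightarrow> bool" where
  "skew_split n \<sigma> m \<longleftrightarrow> 1 \<le> m \<and> m < n \<and> (\<forall>i\<in>{1..m}. \<forall>j\<in>{m+1..n}. \<sigma> j < \<sigma> i)"

lemma skew_split_skew_sum:
  assumes "1 \<le> m" "1 \<le> r" and \<pi>: "\<pi> permutes {1..m}" and \<tau>: "\<tau> permutes {1..r}"
  shows "skew_split (m + r) (skew_sum m \<pi> r \<tau>) m"
  unfolding skew_split_def
proof (intro conjI ballI)
  fix i j assume i: "i \<in> {1..m}" and j: "j \<in> {m+1..m+r}"
  have "\<pi> i \<in> {1..m}" using permutes_in_image[OF \<pi>] i by blast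
  moreover have "\<tau> (j - m) \<in> {1..r}" using permutes_in_image[OF \<tau>, of "j - m"] j by auto
  ultimately show "skew_sum m \<pi> r \<tau> j < skew_sum m \<pi> r \<tau> i"
    using i j unfolding skew_sum_def by auto
qed (use assms in auto)

lemma skew_split_values:
  assumes \<sigma>: "\<sigma> permutes {1..n}" and split: "skew_split n \<sigma> m"
  shows "i \<in> {1..m} \<Longrightarrow> n - m < \<sigma> i" and "j \<in> {m+1..n} \<Longrightarrow> \<sigma> j \<le> n - m"
proof -
  have m: "1 \<le> m" "m < n" and below: "\<And>i j. i \<in> {1..m} \<Longrightarrow> j \<in> {m+1..n} \<Longrightarrow> \<sigma> j < \<sigma> i"
    using split unfolding skew_split_def by auto
  have card_image: "card (\<sigma> ` A) = card A" for A
    by (rule card_image) (meson permutes_inj[OF \<sigma>] inj_on_subset subset_UNIV)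
  have range: "k \<in> {1..n} \<Longrightarrow> \<sigma> k \<in> {1..n}" for k
    using permutes_in_image[OF \<sigma>] by blast
  show "n - m < \<sigma> i" if i: "i \<in> {1..m}"
  proof -
    have "\<sigma> ` {m+1..n} \<subseteq> {1..<\<sigma> i}"
    proof (rule image_subsetI)
      fix j assume "j \<in> {m+1..n}"
      then show "\<sigma> j \<in> {1..<\<sigma> i}" using below[OF i] range[of j] m by auto
    qed
    from card_mono[OF _ this] show ?thesis using card_image[of "{m+1..n}"] range[of i] i m by simp
  qed
  show "\<sigma> j \<le> n - m" if j: "j \<in> {m+1..n}"
  proof -
    have "\<sigma> ` {1..m} \<subseteq> {\<sigma> j<..n}"
    proof (rule image_subsetI)
      fix i assume "i \<in> {1..m}"
      then show "\<sigma> i \<in> {\<sigma> j<..n}" using below[OF _ j] range[of i] m by auto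
    qed
    from card_mono[OF _ this] show ?thesis using card_image[of "{1..m}"] range[of j] j by simp linarith
  qed
qed

lemma skew_split_prefix_permutes:
  assumes \<sigma>: "\<sigma> permutes {1..n}" and split: "skew_split n \<sigma> m"
  shows "(\<lambda>i. if i \<in> {1..m} then \<sigma> i - (n - m) else i) permutes {1..m}"
proof (rule inj_imp_permutes)
  note high = skew_split_values(1)[OF \<sigma> split]
  show "(if i \<in> {1..m} then \<sigma> i - (n - m) else i) \<in> {1..m}" if "i \<in> {1..m}" for i
    using that high[OF that] permutes_in_image[OF \<sigma>, of i] split
    unfolding skew_split_def by auto
  show "inj_on (\<lambda>i. if i \<in> {1..m} then \<sigma> i - (n - m) else i) {1..m}"
  proof (rule inj_onI)
    fix i j assume i: "i \<in> {1..m}" and j: "j \<in> {1..m}"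
      and "(if i \<in> {1..m} then \<sigma> i - (n - m) else i) = (if j \<in> {1..m} then \<sigma> j - (n - m) else j)"
    then have "\<sigma> i = \<sigma> j" using high[OF i] high[OF j] by simp
    then show "i = j" using permutes_eq_iff[OF \<sigma>] by simp
  qed
qed auto

lemma skew_split_suffix_permutes:
  assumes \<sigma>: "\<sigma> permutes {1..n}" and split: "skew_split n \<sigma> m"
  shows "(\<lambda>j. if j \<in> {1..n - m} then \<sigma> (j + m) else j) permutes {1..n - m}"
proof (rule inj_imp_permutes)
  show "(if j \<in> {1..n - m} then \<sigma> (j + m) else j) \<in> {1..n - m}" if "j \<in> {1..n - m}" for j
    using that skew_split_values(2)[OF \<sigma> split, of "j + m"] permutes_in_image[OF \<sigma>, of "j + m"]
    by auto
  show "inj_on (\<lambda>j. if j \<in> {1..n - m} then \<sigma> (j + m) else j) {1..n - m}"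
    by (rule inj_onI) (simp add: permutes_eq_iff[OF \<sigma>])
qed auto

lemma skew_decomposable_of_skew_split:
  assumes \<sigma>: "\<sigma> permutes {1..n}" and split: "skew_split n \<sigma> m"
  shows "skew_decomposable n \<sigma>"
proof -
  define r where "r = n - m"
  define \<pi> where "\<pi> = (\<lambda>i. if i \<in> {1..m} then \<sigma> i - r else i)"
  define \<tau> where "\<tau> = (\<lambda>j. if j \<in> {1..r} then \<sigma> (j + m) else j)"
  have m: "1 \<le> m" "m < n" using split unfolding skew_split_def by auto
  have "\<sigma> = skew_sum m \<pi> r \<tau>"
  proof
    fix i
    consider "i \<in> {1..m}" | "i \<in> {m+1..m+r}" | "i \<notin> {1..n}"
      using m unfolding r_def by fastforce
    then show "\<sigma> i = skew_sum m \<pi> r \<tau> i"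
    proof cases
      case 1
      then show ?thesis
        using skew_split_values(1)[OF \<sigma> split 1] unfolding skew_sum_def \<pi>_def r_def by simp
    next
      case 2
      then have "i - m \<in> {1..r}" by auto
      then show ?thesis using 2 unfolding skew_sum_def \<tau>_def by auto
    next
      case 3
      then show ?thesis using permutes_not_in[OF \<sigma> 3] m unfolding skew_sum_def r_def by auto
    qed
  qed
  moreover have "1 \<le> r" "m + r = n" using m unfolding r_def by auto
  moreover note skew_split_prefix_permutes[OF \<sigma> split, folded r_def, folded \<pi>_def]
    skew_split_suffix_permutes[OF \<sigma> split, folded r_def, folded \<tau>_def]
  ultimately show ?thesis
    using m unfolding skew_decomposable_def by blast
qed

lemma skew_decomposable_iff_skew_split:
  assumes "\<sigma> permutes {1..n}"
  shows "skew_decomposable n \<sigma> \<longleftrightarrow> (\<exists>m. skew_split n \<sigma> m)"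
  using skew_decomposable_of_skew_split[OF assms] skew_split_skew_sum
  unfolding skew_decomposable_def by blast

lemma skew_split_before_one:
  assumes \<sigma>: "\<sigma> permutes {1..n}" and split: "skew_split n \<sigma> m" and one: "\<sigma> k = 1"
  shows "m < k"
proof (rule ccontr)
  assume "\<not> m < k"
  moreover have "k \<noteq> 0" using one permutes_not_in[OF \<sigma>, of 0] by (cases k) auto
  ultimately have "k \<in> {1..m}" by simp
  moreover have "n \<in> {m+1..n}" "\<sigma> n \<in> {1..n}"
    using split permutes_in_image[OF \<sigma>] unfolding skew_split_def by auto
  ultimately have "\<sigma> n < \<sigma> k" "1 \<le> \<sigma> n"
    using split unfolding skew_split_def by auto
  then show False using one by simp
qed

lemma skew_split_lift:
  assumes \<sigma>: "\<sigma> permutes {1..n}" and q: "q \<in> {1..n}"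
    and split: "skew_split (n - 1) (delete_entry n q \<sigma>) m" and "m < q"
    and above: "\<forall>i\<in>{1..m}. \<sigma> q < \<sigma> i"
  shows "skew_split n \<sigma> m"
  unfolding skew_split_def
proof (intro conjI ballI)
  show "1 \<le> m" "m < n" using split unfolding skew_split_def by auto
  fix i j assume i: "i \<in> {1..m}" and j: "j \<in> {m+1..n}"
  show "\<sigma> j < \<sigma> i"
  proof (cases "j = q")
    case False
    define j' where "j' = (if j < q then j else j - 1)"
    have j': "skip_index q j' = j" "j' \<in> {m+1..n-1}"
      unfolding j'_def skip_index_def using False j \<open>m < q\<close> q by auto
    have i': "skip_index q i = i" "i \<in> {1..n-1}"
      unfolding skip_index_def using i \<open>m < q\<close> split unfolding skew_split_def by auto
    have "delete_entry n q \<sigma> j' < delete_entry n q \<sigma> i"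
      using split i j'(2) unfolding skew_split_def by blast
    moreover have "\<sigma> j \<noteq> \<sigma> q" "\<sigma> i \<noteq> \<sigma> q"
      using permutes_eq_iff[OF \<sigma>] False i \<open>m < q\<close> by auto
    ultimately show ?thesis
      using i' j' by (simp add: delete_entry_in lower_above_less_iff)
  qed (use above i in simp)
qed

lemma skew_split_delete_entry:
  assumes \<sigma>: "\<sigma> permutes {1..n}" and split: "skew_split n \<sigma> m" and "m < q" "m < n - 1"
  shows "skew_split (n - 1) (delete_entry n q \<sigma>) m"
  unfolding skew_split_def
proof (intro conjI ballI)
  show "1 \<le> m" "m < n - 1" using split assms(4) unfolding skew_split_def by auto
  fix i j assume i: "i \<in> {1..m}" and j: "j \<in> {m+1..n-1}"
  have "skip_index q i = i" "skip_index q j \<in> {m+1..n}"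
    using i j \<open>m < q\<close> unfolding skip_index_def by auto
  moreover have "\<sigma> (skip_index q j) \<noteq> \<sigma> q" "\<sigma> i \<noteq> \<sigma> q"
    using permutes_eq_iff[OF \<sigma>] i \<open>m < q\<close> by auto
  moreover have "i \<in> {1..n-1}" using i assms(4) by auto
  ultimately show "delete_entry n q \<sigma> j < delete_entry n q \<sigma> i"
    using split i j unfolding skew_split_def by (simp add: delete_entry_in lower_above_less_iff)
qed

section \<open>The recurrence\<close>

lemma A_sind_iff:
  "\<sigma> \<in> A_sind n l \<longleftrightarrow> \<sigma> permutes {1..n} \<and> \<not> contains_pattern n \<sigma> [1,3,2,4] \<and>
     \<not> contains_pattern n \<sigma> [1,4,2,3] \<and> (\<nexists>m. skew_split n \<sigma> m) \<and> \<sigma> l = 1"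
  unfolding A_sind_def avoids_pattern_def skew_indecomposable_def
  using skew_decomposable_iff_skew_split by blast

lemma finite_A_sind: "finite (A_sind n l)"
  by (rule finite_subset[of _ "{\<sigma>. \<sigma> permutes {1..n}}"])
    (auto simp: A_sind_iff finite_permutations)

lemma A_sind_disjoint: "j \<noteq> k \<Longrightarrow> A_sind n j \<inter> A_sind n k = {}"
  using permutes_eq_iff by (fastforce simp: A_sind_iff)

lemma A_sind_gt_one:
  assumes "\<sigma> \<in> A_sind n l" "i \<in> {1..n}" "i \<noteq> l"
  shows "1 < \<sigma> i"
proof -
  have "\<sigma> permutes {1..n}" "\<sigma> l = 1" using assms(1) by (simp_all add: A_sind_iff)
  then show ?thesis
    using assms(2,3) permutes_in_image[of \<sigma> "{1..n}" i] permutes_eq_iff[of \<sigma> "{1..n}" i l]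
    by (auto simp del: atLeastAtMost_iff) (simp add: le_neq_implies_less)
qed

lemma A_sind_diag_empty:
  assumes "2 \<le> n"
  shows "A_sind n n = {}"
proof (rule equals0I)
  fix \<sigma> assume \<sigma>: "\<sigma> \<in> A_sind n n"
  have "skew_split n \<sigma> (n - 1)"
    unfolding skew_split_def using assms A_sind_gt_one[OF \<sigma>] \<sigma> by (auto simp: A_sind_iff)
  then show False using \<sigma> by (auto simp: A_sind_iff)
qed

lemma delete_entry_in_A_sind:
  assumes \<sigma>: "\<sigma> \<in> A_sind n l" and q: "q \<in> {1..n}" and "j \<le> q"
    and one: "delete_entry n q \<sigma> j = 1" and above: "\<forall>i\<in>{1..<j}. \<sigma> q < \<sigma> i"
  shows "delete_entry n q \<sigma> \<in> A_sind (n - 1) j"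
proof -
  have perm: "\<sigma> permutes {1..n}" using \<sigma> by (simp add: A_sind_iff)
  note perm' = delete_entry_permutes[OF perm q]
  have "\<nexists>m. skew_split (n - 1) (delete_entry n q \<sigma>) m"
  proof
    assume "\<exists>m. skew_split (n - 1) (delete_entry n q \<sigma>) m"
    then obtain m where split: "skew_split (n - 1) (delete_entry n q \<sigma>) m" ..
    have "m < j" using skew_split_before_one[OF perm' split one] .
    then have "skew_split n \<sigma> m"
      using skew_split_lift[OF perm q split] \<open>j \<le> q\<close> above by auto
    then show False using \<sigma> by (simp add: A_sind_iff)
  qed
  then show ?thesis
    using \<sigma> perm' one contains_pattern_delete_entry[OF perm] unfolding A_sind_iff by blast
qed

lemma insert_entry_in_A_sind:
  assumes \<tau>: "\<tau> \<in> A_sind (n - 1) j" and q: "q \<in> {1..n}" and v: "v \<in> {1..n}"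
    and one: "insert_entry n q v \<tau> l = 1" and "l \<le> q" "l < n"
    and avoids: "\<not> contains_pattern n (insert_entry n q v \<tau>) [1,3,2,4]"
                "\<not> contains_pattern n (insert_entry n q v \<tau>) [1,4,2,3]"
  shows "insert_entry n q v \<tau> \<in> A_sind n l"
proof -
  have perm: "\<tau> permutes {1..n-1}" using \<tau> by (simp add: A_sind_iff)
  note perm' = insert_entry_permutes[OF perm q v]
  have "\<nexists>m. skew_split n (insert_entry n q v \<tau>) m"
  proof
    assume "\<exists>m. skew_split n (insert_entry n q v \<tau>) m"
    then obtain m where split: "skew_split n (insert_entry n q v \<tau>) m" ..
    have "m < l" using skew_split_before_one[OF perm' split one] .
    then have "m < q" "m < n - 1" using \<open>l \<le> q\<close> \<open>l < n\<close> by linarith+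
    then have "skew_split (n - 1) \<tau> m"
      using skew_split_delete_entry[OF perm' split, of q] by (simp add: delete_insert_entry[OF perm q])
    then show False using \<tau> by (simp add: A_sind_iff)
  qed
  then show ?thesis using perm' one avoids unfolding A_sind_iff by blast
qed

lemma contains_pattern_4I:
  assumes "length P = 4" "1 \<le> a" "a < b" "b < c" "c < d" "d \<le> n"
    and "\<forall>i<4. \<forall>j<4. \<sigma> ([a,b,c,d] ! i) < \<sigma> ([a,b,c,d] ! j) \<longleftrightarrow> P ! i < P ! j"
  shows "contains_pattern n \<sigma> P"
proof -
  have "pattern_occurrence n \<sigma> P (\<lambda>k. [a,b,c,d] ! k)"
    unfolding pattern_occurrence_def using assms
    by (auto simp: numeral_eq_Suc less_Suc_eq)
  then show ?thesis unfolding contains_pattern_iff_occurrence by blast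
qed

text \<open>The occurrence is \<open>1, \<sigma> (l + 1), 2, \<sigma> n\<close>.\<close>

lemma contains_1324_or_1423:
  assumes \<sigma>: "\<sigma> permutes {1..n}" and "\<sigma> l = 1" "\<sigma> p = 2" "l + 1 < p" "p < n"
  shows "contains_pattern n \<sigma> [1,3,2,4] \<or> contains_pattern n \<sigma> [1,4,2,3]"
proof -
  have "l \<noteq> 0" using permutes_in_image[OF \<sigma>, of l] assms by auto
  have big: "2 < \<sigma> k" if "k \<in> {1..n}" "k \<noteq> l" "k \<noteq> p" for k
    using that assms(2,3) permutes_in_image[OF \<sigma>, of k] permutes_eq_iff[OF \<sigma>, of k l]
      permutes_eq_iff[OF \<sigma>, of k p] by (auto simp del: atLeastAtMost_iff) (simp add: nat_less_le)
  have "\<sigma> (l + 1) \<noteq> \<sigma> n" using permutes_eq_iff[OF \<sigma>] assms by simp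
  moreover have "2 < \<sigma> (l + 1)" "2 < \<sigma> n" using big assms \<open>l \<noteq> 0\<close> by auto
  ultimately consider "\<sigma> (l + 1) < \<sigma> n" | "\<sigma> n < \<sigma> (l + 1)" by linarith
  then show ?thesis
  proof cases
    case 1
    have "contains_pattern n \<sigma> [1,3,2,4]"
      by (rule contains_pattern_4I[of _ l "l + 1" p n])
        (use assms 1 \<open>l \<noteq> 0\<close> \<open>2 < \<sigma> (l + 1)\<close> \<open>2 < \<sigma> n\<close> in \<open>auto simp: numeral_eq_Suc less_Suc_eq\<close>)
    then show ?thesis ..
  next
    case 2
    have "contains_pattern n \<sigma> [1,4,2,3]"
      by (rule contains_pattern_4I[of _ l "l + 1" p n])
        (use assms 2 \<open>l \<noteq> 0\<close> \<open>2 < \<sigma> (l + 1)\<close> \<open>2 < \<sigma> n\<close> in \<open>auto simp: numeral_eq_Suc less_Suc_eq\<close>)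
    then show ?thesis ..
  qed
qed

definition one_x_two_y :: "nat list \<Rightarrow> bool" where
  "one_x_two_y P \<longleftrightarrow> length P = 4 \<and> P ! 0 < P ! 2 \<and> P ! 2 < P ! 1 \<and> P ! 2 < P ! 3"

lemma one_x_two_y_1324: "one_x_two_y [1,3,2,4]"
  and one_x_two_y_1423: "one_x_two_y [1,4,2,3]"
  unfolding one_x_two_y_def by simp_all

lemma pattern_occurrence_replace_first:
  assumes \<sigma>: "\<sigma> permutes {1..n}" and occ: "pattern_occurrence n \<sigma> P \<iota>"
    and "\<sigma> (\<iota> 0) = 1" and "\<sigma> p = 2" and "p \<in> {1..n}" and "p < \<iota> 1"
  shows "pattern_occurrence n \<sigma> P (\<iota>(0 := p))"
proof -
  note range = pattern_occurrenceD(1)[OF occ] and mono = pattern_occurrenceD(2)[OF occ]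
  have after_p: "p < \<iota> k" if "0 < k" "k < length P" for k
    using mono[of 1 k] that \<open>p < \<iota> 1\<close> by (cases "k = 1") auto
  have big: "2 < \<sigma> (\<iota> k)" if "0 < k" "k < length P" for k
  proof -
    have "\<sigma> (\<iota> k) \<noteq> \<sigma> p" "\<sigma> (\<iota> k) \<noteq> \<sigma> (\<iota> 0)"
      using after_p[OF that] mono[OF that] permutes_eq_iff[OF \<sigma>] by auto
    moreover have "\<sigma> (\<iota> k) \<in> {1..n}" using range[OF that(2)] permutes_in_image[OF \<sigma>] by blast
    ultimately show ?thesis using assms(3,4) by auto
  qed
  show ?thesis
    unfolding pattern_occurrence_def
  proof (intro conjI allI impI)
    fix i j assume i: "i < length P" and j: "j < length P"
    have "\<sigma> ((\<iota>(0 := p)) i) < \<sigma> ((\<iota>(0 := p)) j) \<longleftrightarrow> \<sigma> (\<iota> i) < \<sigma> (\<iota> j)"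
      using big[OF _ i] big[OF _ j] assms(3,4) by (cases "i = 0"; cases "j = 0") auto
    then show "\<sigma> ((\<iota>(0 := p)) i) < \<sigma> ((\<iota>(0 := p)) j) \<longleftrightarrow> P ! i < P ! j"
      using pattern_occurrenceD(3)[OF occ i j] by simp
  qed (use range mono after_p \<open>p \<in> {1..n}\<close> in auto)
qed

lemma one_x_two_y_occurrence_one_first:
  assumes \<sigma>: "\<sigma> permutes {1..n}" and occ: "pattern_occurrence n \<sigma> P \<iota>" and P: "one_x_two_y P"
    and "k < 4" and "\<sigma> (\<iota> k) = 1"
  shows "k = 0"
proof (rule ccontr)
  assume "k \<noteq> 0"
  then have "P ! 0 < P ! k"
    using P \<open>k < 4\<close> unfolding one_x_two_y_def by (auto simp: numeral_eq_Suc less_Suc_eq)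
  then have "\<sigma> (\<iota> 0) < 1"
    using pattern_occurrenceD(3)[OF occ, of 0 k] assms(4,5) P unfolding one_x_two_y_def by simp
  moreover have "\<sigma> (\<iota> 0) \<in> {1..n}"
    using pattern_occurrenceD(1)[OF occ, of 0] permutes_in_image[OF \<sigma>] P
    unfolding one_x_two_y_def by simp
  ultimately show False by simp
qed

text \<open>Inserting a new entry \<open>1\<close> at or right of the old \<open>1\<close> creates no occurrence of
  1324 or 1423: an occurrence through the new \<open>1\<close> uses it as its first entry, and
  replacing it by the entry \<open>2\<close> (the old \<open>1\<close>) gives an occurrence in the old permutation.\<close>

lemma insert_one_avoids:
  assumes \<tau>: "\<tau> permutes {1..n-1}" and "\<tau> j = 1" "j \<in> {1..l}" "l < n"
    and P: "one_x_two_y P" and avoids: "\<not> contains_pattern (n - 1) \<tau> P"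
  shows "\<not> contains_pattern n (insert_entry n l 1 \<tau>) P"
proof
  define \<sigma> where "\<sigma> = insert_entry n l 1 \<tau>"
  assume "contains_pattern n (insert_entry n l 1 \<tau>) P"
  then obtain \<iota> where occ: "pattern_occurrence n \<sigma> P \<iota>"
    unfolding contains_pattern_iff_occurrence \<sigma>_def by blast
  have l: "l \<in> {1..n}" using assms by auto
  then have \<sigma>: "\<sigma> permutes {1..n}" and "\<sigma> l = 1" and \<tau>_eq: "delete_entry n l \<sigma> = \<tau>"
    unfolding \<sigma>_def using insert_entry_permutes[OF \<tau>] insert_entry_at delete_insert_entry[OF \<tau>]
    by auto
  have P_len: "length P = 4" and "P ! 2 < P ! 1"
    using P unfolding one_x_two_y_def by auto
  note range = pattern_occurrenceD(1)[OF occ, unfolded P_len]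
    and mono = pattern_occurrenceD(2)[OF occ, unfolded P_len]
    and cmp = pattern_occurrenceD(3)[OF occ, unfolded P_len]
  have value_ge_1: "1 \<le> \<sigma> (\<iota> k)" if "k < 4" for k
    using range[OF that] permutes_in_image[OF \<sigma>] by fastforce
  define p where "p = (if j < l then j else l + 1)"
  have p: "p \<in> {1..n}" "p \<noteq> l" "\<sigma> p = 2"
    using assms l unfolding p_def \<sigma>_def by (auto simp: insert_entry_other raise_from_def)
  obtain k where k: "k < 4" "\<iota> k = l"
    using contains_pattern_delete_entryI[OF \<sigma> l occ] avoids \<tau>_eq P_len by auto
  with one_x_two_y_occurrence_one_first[OF \<sigma> occ P] \<open>\<sigma> l = 1\<close> have \<iota>0: "\<iota> 0 = l" by auto
  have "p < \<iota> 1"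
  proof (cases "j < l")
    case False
    have "\<iota> 1 \<noteq> l + 1"
    proof
      assume "\<iota> 1 = l + 1"
      then have "\<sigma> (\<iota> 2) < 2" using cmp[of 2 1] \<open>P ! 2 < P ! 1\<close> False p(3) unfolding p_def by simp
      moreover have "\<sigma> (\<iota> 2) \<noteq> \<sigma> (\<iota> 0)" using mono[of 0 2] permutes_eq_iff[OF \<sigma>] by simp
      ultimately show False using value_ge_1[of 2] \<iota>0 \<open>\<sigma> l = 1\<close> by simp
    qed
    then show ?thesis using mono[of 0 1] \<iota>0 False unfolding p_def by simp
  qed (use mono[of 0 1] \<iota>0 in \<open>simp add: p_def\<close>)
  then have "pattern_occurrence n \<sigma> P (\<iota>(0 := p))"
    using pattern_occurrence_replace_first[OF \<sigma> occ] \<iota>0 \<open>\<sigma> l = 1\<close> p by simp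
  moreover have "\<forall>k < length P. (\<iota>(0 := p)) k \<noteq> l"
    using mono[of 0] \<iota>0 p(2) P_len by (auto simp: nat_neq_iff)
  ultimately show False
    using contains_pattern_delete_entryI[OF \<sigma> l] avoids \<tau>_eq by blast
qed

text \<open>Appending a new last entry \<open>2\<close> creates no occurrence of 1324 or 1423: it could only
  play the role of the last pattern entry, which lies above two other entries.\<close>

lemma insert_two_last_avoids:
  assumes \<tau>: "\<tau> permutes {1..n-1}" and "2 \<le> n"
    and P: "one_x_two_y P" and avoids: "\<not> contains_pattern (n - 1) \<tau> P"
  shows "\<not> contains_pattern n (insert_entry n n 2 \<tau>) P"
proof
  define \<sigma> where "\<sigma> = insert_entry n n 2 \<tau>"
  assume "contains_pattern n (insert_entry n n 2 \<tau>) P"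
  then obtain \<iota> where occ: "pattern_occurrence n \<sigma> P \<iota>"
    unfolding contains_pattern_iff_occurrence \<sigma>_def by blast
  have n: "n \<in> {1..n}" "2 \<in> {1..n}" using assms by auto
  then have \<sigma>: "\<sigma> permutes {1..n}" and "\<sigma> n = 2" and \<tau>_eq: "delete_entry n n \<sigma> = \<tau>"
    unfolding \<sigma>_def using insert_entry_permutes[OF \<tau>] insert_entry_at delete_insert_entry[OF \<tau>]
    by auto
  have P_len: "length P = 4" and P_lt: "P ! 0 < P ! 3" "P ! 2 < P ! 3"
    using P unfolding one_x_two_y_def by auto
  note range = pattern_occurrenceD(1)[OF occ, unfolded P_len]
    and mono = pattern_occurrenceD(2)[OF occ, unfolded P_len]
    and cmp = pattern_occurrenceD(3)[OF occ, unfolded P_len]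
  obtain k where "k < 4" "\<iota> k = n"
    using contains_pattern_delete_entryI[OF \<sigma> n(1) occ] avoids \<tau>_eq P_len by auto
  moreover have "\<not> k < 3" using mono[of k 3] range[of 3] \<open>\<iota> k = n\<close> by auto
  ultimately have "k = 3" by simp
  with \<open>\<iota> k = n\<close> have "\<iota> 3 = n" by simp
  then have "\<sigma> (\<iota> 0) < 2" "\<sigma> (\<iota> 2) < 2"
    using cmp[of 0 3] cmp[of 2 3] P_lt \<open>\<sigma> n = 2\<close> by auto
  moreover have "1 \<le> \<sigma> (\<iota> 0)" "1 \<le> \<sigma> (\<iota> 2)"
    using range permutes_in_image[OF \<sigma>] by fastforce+
  ultimately have "\<sigma> (\<iota> 0) = \<sigma> (\<iota> 2)" by simp
  then show False using mono[of 0 2] permutes_eq_iff[OF \<sigma>] by simp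
qed

definition A_two_near :: "nat \<Rightarrow> nat \<Rightarrow> (nat \<Rightarrow> nat) set" where
  "A_two_near n l = {\<sigma> \<in> A_sind n l. \<exists>p. \<sigma> p = 2 \<and> (p < l \<or> p = l + 1)}"

definition A_two_last :: "nat \<Rightarrow> nat \<Rightarrow> (nat \<Rightarrow> nat) set" where
  "A_two_last n l = {\<sigma> \<in> A_sind n l. l + 1 < n \<and> \<sigma> n = 2}"

lemma A_sind_eq_Un:
  assumes "1 \<le> l" "l < n"
  shows "A_sind n l = A_two_near n l \<union> A_two_last n l"
proof
  show "A_sind n l \<subseteq> A_two_near n l \<union> A_two_last n l"
  proof
    fix \<sigma> assume \<sigma>A: "\<sigma> \<in> A_sind n l"
    then have \<sigma>: "\<sigma> permutes {1..n}" and "\<sigma> l = 1" by (simp_all add: A_sind_iff)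
    obtain p where p: "\<sigma> p = 2" using permutes_surj[OF \<sigma>] by (metis surjD)
    have "p \<in> {1..n}" "p \<noteq> l"
      using permutes_in_image[OF \<sigma>, of p] p \<open>\<sigma> l = 1\<close> assms by auto
    then consider "p < l \<or> p = l + 1" | "p = n" "l + 1 < n" | "l + 1 < p" "p < n"
      by (cases "p < l \<or> p = l + 1"; cases "p = n") auto
    then show "\<sigma> \<in> A_two_near n l \<union> A_two_last n l"
    proof cases
      case 3
      then show ?thesis
        using contains_1324_or_1423[OF \<sigma> \<open>\<sigma> l = 1\<close> p] \<sigma>A by (simp add: A_sind_iff)
    qed (use \<sigma>A p in \<open>auto simp: A_two_near_def A_two_last_def\<close>)
  qed
qed (auto simp: A_two_near_def A_two_last_def)

lemma A_two_near_last_disjoint: "A_two_near n l \<inter> A_two_last n l = {}"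
proof (rule equals0I)
  fix \<sigma> assume "\<sigma> \<in> A_two_near n l \<inter> A_two_last n l"
  then obtain p where "\<sigma> p = 2" "p < l \<or> p = l + 1" "\<sigma> n = 2" "l + 1 < n" "\<sigma> permutes {1..n}"
    unfolding A_two_near_def A_two_last_def A_sind_iff by blast
  then show False using permutes_eq_iff[of \<sigma> "{1..n}" p n] by auto
qed

text \<open>Deleting the \<open>1\<close> turns the entry \<open>2\<close> into the new \<open>1\<close>, at a position \<open>j \<le> l\<close>.\<close>

lemma delete_one_in_A_sind:
  assumes "\<sigma> \<in> A_two_near n l" "1 \<le> l" "l < n"
  shows "delete_entry n l \<sigma> \<in> (\<Union>j\<in>{1..l}. A_sind (n - 1) j)"
proof -
  obtain p where \<sigma>A: "\<sigma> \<in> A_sind n l" and p: "\<sigma> p = 2" "p < l \<or> p = l + 1"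
    using assms(1) unfolding A_two_near_def by blast
  then have \<sigma>: "\<sigma> permutes {1..n}" and "\<sigma> l = 1" by (simp_all add: A_sind_iff)
  have l: "l \<in> {1..n}" using assms by simp
  have above: "\<forall>i\<in>{1..<j}. \<sigma> l < \<sigma> i" if "j \<le> l" for j
    using A_sind_gt_one[OF \<sigma>A] \<open>\<sigma> l = 1\<close> that assms by auto
  show ?thesis
  proof (cases "p < l")
    case True
    have "p \<noteq> 0" using p permutes_not_in[OF \<sigma>, of 0] by (cases p) auto
    then have "delete_entry n l \<sigma> p = 1"
      using True p assms \<open>\<sigma> l = 1\<close> by (simp add: delete_entry_in skip_index_def lower_above_def)
    then have "delete_entry n l \<sigma> \<in> A_sind (n - 1) p"
      using delete_entry_in_A_sind[OF \<sigma>A l] True above by simp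
    then show ?thesis using True \<open>p \<noteq> 0\<close> by auto
  next
    case False
    then have "delete_entry n l \<sigma> l = 1"
      using p assms \<open>\<sigma> l = 1\<close> by (simp add: delete_entry_in skip_index_def lower_above_def)
    then have "delete_entry n l \<sigma> \<in> A_sind (n - 1) l"
      using delete_entry_in_A_sind[OF \<sigma>A l] above by simp
    then show ?thesis using assms by auto
  qed
qed

lemma insert_one_in_A_two_near:
  assumes \<tau>A: "\<tau> \<in> A_sind (n - 1) j" and j: "j \<in> {1..l}" and "l < n"
  shows "insert_entry n l 1 \<tau> \<in> A_two_near n l"
proof -
  have l: "l \<in> {1..n}" using assms by simp
  have \<tau>: "\<tau> permutes {1..n-1}" and "\<tau> j = 1" and
    avoids: "\<not> contains_pattern (n - 1) \<tau> [1,3,2,4]" "\<not> contains_pattern (n - 1) \<tau> [1,4,2,3]"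
    using \<tau>A by (simp_all add: A_sind_iff)
  have "insert_entry n l 1 \<tau> \<in> A_sind n l"
    using insert_entry_in_A_sind[OF \<tau>A l]
      insert_one_avoids[OF \<tau> \<open>\<tau> j = 1\<close> j \<open>l < n\<close> one_x_two_y_1324 avoids(1)]
      insert_one_avoids[OF \<tau> \<open>\<tau> j = 1\<close> j \<open>l < n\<close> one_x_two_y_1423 avoids(2)]
      insert_entry_at[OF l] assms by simp
  moreover define p where "p = (if j < l then j else l + 1)"
  then have "insert_entry n l 1 \<tau> p = 2" "p < l \<or> p = l + 1"
    using j assms \<open>\<tau> j = 1\<close> by (auto simp: insert_entry_other raise_from_def)
  ultimately show ?thesis unfolding A_two_near_def by blast
qed

lemma bij_betw_A_two_near:
  assumes "1 \<le> l" "l < n"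
  shows "bij_betw (delete_entry n l) (A_two_near n l) (\<Union>j\<in>{1..l}. A_sind (n - 1) j)"
proof (rule bij_betw_byWitness[where f' = "insert_entry n l 1"])
  have l: "l \<in> {1..n}" using assms by simp
  show "\<forall>\<sigma>\<in>A_two_near n l. insert_entry n l 1 (delete_entry n l \<sigma>) = \<sigma>"
  proof
    fix \<sigma> assume "\<sigma> \<in> A_two_near n l"
    then have "\<sigma> permutes {1..n}" "\<sigma> l = 1" by (simp_all add: A_two_near_def A_sind_iff)
    then show "insert_entry n l 1 (delete_entry n l \<sigma>) = \<sigma>" using insert_delete_entry[OF _ l] by metis
  qed
  show "\<forall>\<tau>\<in>(\<Union>j\<in>{1..l}. A_sind (n - 1) j). delete_entry n l (insert_entry n l 1 \<tau>) = \<tau>"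
    using delete_insert_entry[OF _ l] by (auto simp: A_sind_iff)
  show "delete_entry n l ` A_two_near n l \<subseteq> (\<Union>j\<in>{1..l}. A_sind (n - 1) j)"
    using delete_one_in_A_sind assms by blast
  show "insert_entry n l 1 ` (\<Union>j\<in>{1..l}. A_sind (n - 1) j) \<subseteq> A_two_near n l"
    using insert_one_in_A_two_near assms by blast
qed

lemma delete_last_in_A_sind:
  assumes "\<sigma> \<in> A_two_last n l" "1 \<le> l"
  shows "delete_entry n n \<sigma> \<in> A_sind (n - 1) l"
proof -
  have \<sigma>A: "\<sigma> \<in> A_sind n l" and "\<sigma> n = 2" "l + 1 < n" using assms(1) unfolding A_two_last_def by auto
  then have "\<sigma> l = 1" by (simp add: A_sind_iff)
  have "delete_entry n n \<sigma> l = 1"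
    using assms \<open>l + 1 < n\<close> \<open>\<sigma> l = 1\<close> \<open>\<sigma> n = 2\<close>
    by (simp add: delete_entry_in skip_index_def lower_above_def)
  moreover have "\<forall>i\<in>{1..<l}. \<sigma> n < \<sigma> i"
  proof
    fix i assume i: "i \<in> {1..<l}"
    have "\<sigma> i \<noteq> \<sigma> n"
      using \<sigma>A i \<open>l + 1 < n\<close> permutes_eq_iff[of \<sigma> "{1..n}" i n] by (simp add: A_sind_iff)
    then show "\<sigma> n < \<sigma> i" using A_sind_gt_one[OF \<sigma>A, of i] i \<open>l + 1 < n\<close> \<open>\<sigma> n = 2\<close> by auto
  qed
  moreover have "n \<in> {1..n}" using \<open>l + 1 < n\<close> by simp
  ultimately show ?thesis using delete_entry_in_A_sind[OF \<sigma>A] \<open>l + 1 < n\<close> by simp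
qed

lemma insert_two_last_in_A_two_last:
  assumes \<tau>A: "\<tau> \<in> A_sind (n - 1) l" and "1 \<le> l" "l + 1 < n"
  shows "insert_entry n n 2 \<tau> \<in> A_two_last n l"
proof -
  have n: "n \<in> {1..n}" "2 \<in> {1..n}" using assms by auto
  have \<tau>: "\<tau> permutes {1..n-1}" and "\<tau> l = 1" and
    avoids: "\<not> contains_pattern (n - 1) \<tau> [1,3,2,4]" "\<not> contains_pattern (n - 1) \<tau> [1,4,2,3]"
    using \<tau>A by (simp_all add: A_sind_iff)
  have "insert_entry n n 2 \<tau> l = 1"
    using assms \<open>\<tau> l = 1\<close> by (simp add: insert_entry_other raise_from_def)
  then have "insert_entry n n 2 \<tau> \<in> A_sind n l"
    using insert_entry_in_A_sind[OF \<tau>A n]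
      insert_two_last_avoids[OF \<tau> _ one_x_two_y_1324 avoids(1)]
      insert_two_last_avoids[OF \<tau> _ one_x_two_y_1423 avoids(2)] assms by simp
  then show ?thesis
    using insert_entry_at[OF n(1)] assms unfolding A_two_last_def by simp
qed

lemma bij_betw_A_two_last:
  assumes "1 \<le> l" "l + 1 < n"
  shows "bij_betw (delete_entry n n) (A_two_last n l) (A_sind (n - 1) l)"
proof (rule bij_betw_byWitness[where f' = "insert_entry n n 2"])
  have n: "n \<in> {1..n}" using assms by auto
  show "\<forall>\<sigma>\<in>A_two_last n l. insert_entry n n 2 (delete_entry n n \<sigma>) = \<sigma>"
  proof
    fix \<sigma> assume "\<sigma> \<in> A_two_last n l"
    then have "\<sigma> permutes {1..n}" "\<sigma> n = 2" by (simp_all add: A_two_last_def A_sind_iff)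
    then show "insert_entry n n 2 (delete_entry n n \<sigma>) = \<sigma>" using insert_delete_entry[OF _ n] by metis
  qed
  show "\<forall>\<tau>\<in>A_sind (n - 1) l. delete_entry n n (insert_entry n n 2 \<tau>) = \<tau>"
    using delete_insert_entry[OF _ n] by (auto simp: A_sind_iff)
  show "delete_entry n n ` A_two_last n l \<subseteq> A_sind (n - 1) l"
    using delete_last_in_A_sind assms by blast
  show "insert_entry n n 2 ` A_sind (n - 1) l \<subseteq> A_two_last n l"
    using insert_two_last_in_A_two_last assms by blast
qed

lemma a_sind_recurrence:
  assumes "3 \<le> n" "1 \<le> l" "l \<le> n - 1"
  shows "a_sind n l = 2 * a_sind (n - 1) l + (\<Sum>j = 1..l - 1. a_sind (n - 1) j)"
proof -
  have "l < n" using assms by simp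
  have "card (A_two_near n l) = card (\<Union>j\<in>{1..l}. A_sind (n - 1) j)"
    using bij_betw_same_card[OF bij_betw_A_two_near] assms by simp
  also have "\<dots> = (\<Sum>j = 1..l. a_sind (n - 1) j)"
    unfolding a_sind_def by (rule card_UN_disjoint) (auto simp: finite_A_sind A_sind_disjoint)
  finally have near: "card (A_two_near n l) = (\<Sum>j = 1..l. a_sind (n - 1) j)" .
  have last: "card (A_two_last n l) = a_sind (n - 1) l"
  proof (cases "l + 1 < n")
    case True
    then show ?thesis
      unfolding a_sind_def using bij_betw_same_card[OF bij_betw_A_two_last] assms by simp
  next
    case False
    then have "l = n - 1" using assms by simp
    then show ?thesis using False A_sind_diag_empty[of "n - 1"] assms
      by (simp add: A_two_last_def a_sind_def)
  qed
  have "A_two_near n l \<subseteq> A_sind n l" "A_two_last n l \<subseteq> A_sind n l"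
    unfolding A_two_near_def A_two_last_def by auto
  then have "finite (A_two_near n l)" "finite (A_two_last n l)"
    using finite_A_sind finite_subset by blast+
  then have "a_sind n l = card (A_two_near n l) + card (A_two_last n l)"
    unfolding a_sind_def A_sind_eq_Un[OF assms(2) \<open>l < n\<close>]
    by (simp add: card_Un_disjoint A_two_near_last_disjoint)
  also have "\<dots> = 2 * a_sind (n - 1) l + (\<Sum>j = 1..l - 1. a_sind (n - 1) j)"
    unfolding near last using sum.cl_ivl_Suc[of "a_sind (n - 1)" 1 "l - 1"] assms by simp
  finally show ?thesis .
qed

lemma not_contains_pattern_longer:
  assumes "n < length P"
  shows "\<not> contains_pattern n \<sigma> P"
proof
  assume "contains_pattern n \<sigma> P"
  then obtain \<iota> where occ: "pattern_occurrence n \<sigma> P \<iota>"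
    unfolding contains_pattern_iff_occurrence ..
  have bound: "i + 1 \<le> \<iota> i" if "i < length P" for i
    using that
  proof (induction i)
    case (Suc i)
    then show ?case using pattern_occurrenceD(2)[OF occ, of i "Suc i"] by simp
  qed (use pattern_occurrenceD(1)[OF occ] in auto)
  have "length P - 1 < length P" using assms by simp
  then have "length P \<le> \<iota> (length P - 1)" "\<iota> (length P - 1) \<le> n"
    using bound pattern_occurrenceD(1)[OF occ] by fastforce+
  then show False using assms by simp
qed

lemma A_sind_small:
  assumes "n \<in> {1, 2}"
  shows "A_sind n 1 = {id}"
proof
  have "\<not> skew_split n id m" for m
    unfolding skew_split_def by force
  then show "{id} \<subseteq> A_sind n 1"
    using assms not_contains_pattern_longer[of n "[1,3,2,4]"] not_contains_pattern_longer[of n "[1,4,2,3]"]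
    by (auto simp: A_sind_iff permutes_id)
  show "A_sind n 1 \<subseteq> {id}"
  proof
    fix \<sigma> assume "\<sigma> \<in> A_sind n 1"
    then have \<sigma>: "\<sigma> permutes {1..n}" and "\<sigma> 1 = 1" by (simp_all add: A_sind_iff)
    have "\<sigma> i = i" for i
    proof (cases "i \<in> {1..n}")
      case True
      show ?thesis
      proof (cases "i = 1")
        case False
        then have "i = 2" "n = 2" using True assms by auto
        moreover have "\<sigma> i \<in> {1..n}" "\<sigma> i \<noteq> 1"
          using True False permutes_in_image[OF \<sigma>] permutes_eq_iff[OF \<sigma>, of i 1] \<open>\<sigma> 1 = 1\<close>
          by auto
        ultimately show ?thesis by auto
      qed (use \<open>\<sigma> 1 = 1\<close> in simp)
    qed (use permutes_not_in[OF \<sigma>] in simp)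
    then show "\<sigma> \<in> {id}" by auto
  qed
qed

lemma a_sind_1_1: "a_sind 1 1 = 1"
  and a_sind_2_1: "a_sind 2 1 = 1"
  using A_sind_small[of 1] A_sind_small[of 2] by (simp_all add: a_sind_def)

section \<open>The generating function\<close>

lemma sum_pow2_less: "(\<Sum>j = 1..l - 1. (2::nat) ^ j) < 2 ^ l"
proof -
  have "(\<Sum>j = 1..l - 1. (2::nat) ^ j) \<le> (\<Sum>j = 0..<l. 2 ^ j)"
    by (rule sum_mono2) auto
  also have "\<dots> = 2 ^ l - 1" by (rule sum_power2)
  finally show ?thesis by (simp add: less_eq_iff_succ_less)
qed

lemma one_minus_mult_sum_partial_sums:
  fixes u :: "'a :: comm_ring_1"
  shows "(1 - u) * (\<Sum>l = 1..N. (\<Sum>j = 1..l - 1. b j) * u ^ l)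
       = (\<Sum>j = 1..N. b j * (u ^ (j + 1) - u ^ (N + 1)))"
proof (induction N)
  case (Suc N)
  have step: "(1 - u) * u ^ Suc N = u ^ (N + 1) - u ^ (N + 2)" by (simp add: algebra_simps)
  have "(1 - u) * (\<Sum>l = 1..Suc N. (\<Sum>j = 1..l - 1. b j) * u ^ l)
      = (\<Sum>j = 1..N. b j * (u ^ (j + 1) - u ^ (N + 1))) + (\<Sum>j = 1..N. b j) * ((1 - u) * u ^ Suc N)"
    using Suc.IH by (simp add: algebra_simps)
  also have "\<dots> = (\<Sum>j = 1..N. b j * (u ^ (j + 1) - u ^ (N + 1)) + b j * (u ^ (N + 1) - u ^ (N + 2)))"
    by (simp only: step sum_distrib_right sum.distrib)
  also have "\<dots> = (\<Sum>j = 1..Suc N. b j * (u ^ (j + 1) - u ^ (Suc N + 1)))"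
    by (simp add: algebra_simps)
  finally show ?case .
qed simp

lemma abs_one_minus_sqrt_le:
  fixes d :: real
  assumes "0 \<le> d"
  shows "\<bar>1 - sqrt d\<bar> \<le> \<bar>1 - d\<bar>"
proof -
  have "1 - d = (1 - sqrt d) * (1 + sqrt d)"
    using assms by (simp add: algebra_simps)
  moreover have "0 \<le> sqrt d" using assms by simp
  ultimately have "\<bar>1 - d\<bar> = \<bar>1 - sqrt d\<bar> * (1 + sqrt d)" using assms by (simp add: abs_mult)
  moreover have "\<bar>1 - sqrt d\<bar> * 1 \<le> \<bar>1 - sqrt d\<bar> * (1 + sqrt d)" using \<open>0 \<le> sqrt d\<close> by (intro mult_left_mono) auto
  ultimately show ?thesis by simp
qed

locale sind_recurrence =
  fixes a :: "nat \<Rightarrow> nat \<Rightarrow> nat"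
  assumes a_1_1: "a 1 1 = 1" and a_2_1: "a 2 1 = 1"
    and a_diag: "2 \<le> n \<Longrightarrow> a n n = 0"
    and a_rec: "3 \<le> n \<Longrightarrow> 1 \<le> l \<Longrightarrow> l \<le> n - 1 \<Longrightarrow>
                a n l = 2 * a (n - 1) l + (\<Sum>j = 1..l - 1. a (n - 1) j)"
begin

definition row :: "nat \<Rightarrow> real \<Rightarrow> real" where
  "row n u = (\<Sum>l = 1..n. real (a n l) * u ^ l)"

definition gf :: "real \<Rightarrow> real \<Rightarrow> real" where
  "gf x u = (\<Sum>n. row n u * x ^ n)"

lemma a_le: "1 \<le> l \<Longrightarrow> l \<le> n \<Longrightarrow> a n l \<le> 3 ^ n * 2 ^ l"
proof (induction n arbitrary: l rule: less_induct)
  case (less n)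
  consider "n \<le> 2" | "l = n" "3 \<le> n" | "3 \<le> n" "l \<le> n - 1" using less.prems by linarith
  then show ?case
  proof cases
    case 1
    then have "n = 1 \<and> l = 1 \<or> n = 2 \<and> l = 1 \<or> n = 2 \<and> l = 2" using less.prems by auto
    then show ?thesis using a_1_1 a_2_1 a_diag[of 2] by auto
  next
    case 2
    then show ?thesis using a_diag by simp
  next
    case 3
    have IH: "a (n - 1) j \<le> 3 ^ (n - 1) * 2 ^ j" if "1 \<le> j" "j \<le> l" for j
      using less.IH[of "n - 1" j] that 3 by simp
    have "(\<Sum>j = 1..l - 1. a (n - 1) j) \<le> (\<Sum>j = 1..l - 1. 3 ^ (n - 1) * 2 ^ j)"
      by (rule sum_mono) (use IH in auto)
    also have "\<dots> = 3 ^ (n - 1) * (\<Sum>j = 1..l - 1. 2 ^ j)"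
      by (simp add: sum_distrib_left)
    also have "\<dots> \<le> 3 ^ (n - 1) * 2 ^ l"
      using sum_pow2_less[of l] by simp
    finally have "a n l \<le> 3 * (3 ^ (n - 1) * 2 ^ l)"
      using a_rec[OF 3(1) less.prems(1) 3(2)] IH[of l] less.prems by linarith
    also have "\<dots> = 3 ^ n * 2 ^ l"
      using 3 by (cases n) auto
    finally show ?thesis .
  qed
qed

lemma abs_row_le: "\<bar>u\<bar> \<le> 2 \<Longrightarrow> \<bar>row n u\<bar> \<le> 24 ^ n"
proof -
  assume u: "\<bar>u\<bar> \<le> 2"
  have "\<bar>row n u\<bar> \<le> (\<Sum>l = 1..n. real (a n l) * \<bar>u\<bar> ^ l)"
    unfolding row_def by (rule order_trans[OF sum_abs]) (simp add: abs_mult power_abs)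
  also have "\<dots> \<le> (\<Sum>l = 1..n. 12 ^ n)"
  proof (rule sum_mono)
    fix l assume l: "l \<in> {1..n}"
    have "real (a n l) \<le> 3 ^ n * 2 ^ l"
      using of_nat_mono[OF a_le[of l n]] l by simp
    then have "real (a n l) * \<bar>u\<bar> ^ l \<le> (3 ^ n * 2 ^ l) * 2 ^ l"
      using u by (intro mult_mono power_mono) auto
    also have "\<dots> \<le> 3 ^ n * 2 ^ n * 2 ^ n"
      using l by (intro mult_mono power_increasing) auto
    finally show "real (a n l) * \<bar>u\<bar> ^ l \<le> 12 ^ n"
      by (simp add: power_mult_distrib[symmetric])
  qed
  also have "\<dots> = real n * 12 ^ n" by simp
  also have "\<dots> \<le> 2 ^ n * 12 ^ n"
    using of_nat_mono[OF less_imp_le[OF less_exp[of n]]] by (intro mult_right_mono) auto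
  also have "\<dots> = 24 ^ n" by (simp add: power_mult_distrib[symmetric])
  finally show ?thesis .
qed

lemma summable_row: "\<bar>u\<bar> \<le> 2 \<Longrightarrow> \<bar>x\<bar> < 1/48 \<Longrightarrow> summable (\<lambda>n. row n u * x ^ n)"
proof (rule summable_comparison_test[of _ "\<lambda>n. (1/2::real) ^ n"])
  assume "\<bar>u\<bar> \<le> 2" "\<bar>x\<bar> < 1/48"
  have "norm (row n u * x ^ n) \<le> (1/2) ^ n" for n
  proof -
    have "norm (row n u * x ^ n) = \<bar>row n u\<bar> * \<bar>x\<bar> ^ n" by (simp add: abs_mult power_abs)
    also have "\<dots> \<le> 24 ^ n * (1/48) ^ n"
      using abs_row_le[OF \<open>\<bar>u\<bar> \<le> 2\<close>] \<open>\<bar>x\<bar> < 1/48\<close> by (intro mult_mono power_mono) auto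
    also have "\<dots> = (1/2) ^ n" by (simp add: power_mult_distrib[symmetric])
    finally show ?thesis .
  qed
  then show "\<exists>N. \<forall>n\<ge>N. norm (row n u * x ^ n) \<le> (1/2) ^ n" by blast
qed simp

lemma row_0: "row 0 u = 0"
  and row_1: "row 1 u = u"
  and row_2: "row 2 u = u"
  using a_1_1 a_2_1 a_diag[of 2] by (simp_all add: row_def numeral_2_eq_2)

lemma row_step:
  assumes "3 \<le> n"
  shows "(1 - u) * row n u = (2 - u) * row (n - 1) u - u ^ n * row (n - 1) 1"
proof -
  define m where "m = n - 1"
  have n: "n = Suc m" using assms unfolding m_def by simp
  have "row n u = (\<Sum>l = 1..m. real (a n l) * u ^ l)"
    unfolding row_def n using a_diag[of n] assms n by simp
  also have "\<dots> = (\<Sum>l = 1..m. (2 * real (a m l) + (\<Sum>j = 1..l - 1. real (a m j))) * u ^ l)"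
  proof (rule sum.cong)
    fix l assume "l \<in> {1..m}"
    then show "real (a n l) * u ^ l = (2 * real (a m l) + (\<Sum>j = 1..l - 1. real (a m j))) * u ^ l"
      using a_rec[OF assms, of l] n by simp
  qed simp
  also have "\<dots> = 2 * row m u + (\<Sum>l = 1..m. (\<Sum>j = 1..l - 1. real (a m j)) * u ^ l)"
    unfolding row_def by (simp only: distrib_right sum.distrib sum_distrib_left mult.assoc)
  finally have "(1 - u) * row n u
      = 2 * (1 - u) * row m u + (\<Sum>j = 1..m. real (a m j) * (u ^ (j + 1) - u ^ (m + 1)))"
    using one_minus_mult_sum_partial_sums[where u = u and N = m and b = "\<lambda>j. real (a m j)"]
    by (simp only: distrib_left mult.assoc mult.left_commute[of "1 - u"])
  also have "(\<Sum>j = 1..m. real (a m j) * (u ^ (j + 1) - u ^ (m + 1))) = u * row m u - u ^ n * row m 1"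
    unfolding row_def n
    by (simp add: right_diff_distrib sum_subtractf sum_distrib_left mult.commute mult.left_commute)
  finally show ?thesis unfolding m_def by (simp add: algebra_simps)
qed

lemma gf_functional_equation:
  assumes x: "\<bar>x\<bar> < 1/96" and u: "\<bar>u\<bar> \<le> 2"
  shows "gf x u * ((1 - u) - (2 - u) * x) = (1 - u) * u * x * (1 - x) - u * x * gf (u * x) 1"
proof -
  define s where "s n = row n u * x ^ n" for n
  define t where "t n = row n 1 * (u * x) ^ n" for n
  have "\<bar>u * x\<bar> \<le> 2 * \<bar>x\<bar>" using u by (simp add: abs_mult mult_right_mono)
  then have "\<bar>u * x\<bar> < 1/48" using x by simp
  then have S: "s sums gf x u" and T: "t sums gf (u * x) 1"
    using summable_row[OF u] summable_row[of 1] x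
    unfolding s_def t_def gf_def by (simp_all add: summable_sums)
  have "(\<lambda>i. (1 - u) * s (i + 3)) sums ((1 - u) * (gf x u - (\<Sum>i<3. s i)))"
    by (rule sums_mult[OF sums_split_initial_segment[OF S]])
  moreover have "(\<lambda>i. (2 - u) * x * s (i + 2) - u * x * t (i + 2)) sums
      ((2 - u) * x * (gf x u - (\<Sum>i<2. s i)) - u * x * (gf (u * x) 1 - (\<Sum>i<2. t i)))"
    by (rule sums_diff[OF sums_mult[OF sums_split_initial_segment[OF S]]
          sums_mult[OF sums_split_initial_segment[OF T]]])
  moreover have "(1 - u) * s (i + 3) = (2 - u) * x * s (i + 2) - u * x * t (i + 2)" for i
  proof -
    have "(1 - u) * s (i + 3) = x * x ^ (i + 2) * ((1 - u) * row (i + 3) u)"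
      by (simp add: s_def algebra_simps numeral_3_eq_3 numeral_2_eq_2)
    also have "\<dots> = x * x ^ (i + 2) * ((2 - u) * row (i + 2) u - u * u ^ (i + 2) * row (i + 2) 1)"
      using row_step[of "i + 3" u] by (simp add: numeral_3_eq_3 numeral_2_eq_2)
    also have "\<dots> = (2 - u) * x * s (i + 2) - u * x * t (i + 2)"
      by (simp add: s_def t_def algebra_simps power_mult_distrib)
    finally show ?thesis .
  qed
  ultimately have "(1 - u) * (gf x u - (\<Sum>i<3. s i))
      = (2 - u) * x * (gf x u - (\<Sum>i<2. s i)) - u * x * (gf (u * x) 1 - (\<Sum>i<2. t i))"
    by (simp add: sums_unique2)
  moreover have "(\<Sum>i<3. s i) = s 0 + s 1 + s 2" "(\<Sum>i<2. s i) = s 0 + s 1" "(\<Sum>i<2. t i) = t 0 + t 1"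
    by (simp_all add: eval_nat_numeral)
  moreover have "s 0 = 0" "s 1 = u * x" "s 2 = u * x ^ 2" "t 0 = 0" "t 1 = u * x"
    using row_1[of u] row_1[of 1] by (simp_all add: s_def t_def row_0 row_2)
  ultimately show ?thesis by (simp add: algebra_simps power2_eq_square)
qed

text \<open>Kernel method: for \<open>u = (1 - 2 x) / (1 - x)\<close> the coefficient of \<open>gf x u\<close> in the
  functional equation vanishes, which leaves an equation for \<open>gf (u x) 1\<close> alone.\<close>

lemma gf_at_one:
  assumes y: "\<bar>y\<bar> \<le> 1/200"
  shows "gf y 1 = (1 + y - sqrt (1 - 6 * y + y\<^sup>2)) / 4"
proof (cases "y = 0")
  case True
  then show ?thesis using powser_zero[of "\<lambda>n. row n 1"] row_0 by (simp add: gf_def)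
next
  case False
  define d where "d = 1 - 6 * y + y\<^sup>2"
  define s where "s = sqrt d"
  define x where "x = (1 + y - s) / 4"
  have y_bounds: "-1/200 \<le> y" "y \<le> 1/200" using y by (simp_all add: abs_le_iff)
  have "y\<^sup>2 \<le> 1/200 * \<bar>y\<bar>"
    using mult_right_mono[OF y, of "\<bar>y\<bar>"] by (simp add: power2_eq_square abs_mult_self_eq)
  then have "y\<^sup>2 \<le> 1/40000" using y by simp
  then have d_bounds: "1 - d \<le> 7/200" "-(1 - d) \<le> 7/200" "0 \<le> d"
    using y_bounds zero_le_power2[of y] unfolding d_def by linarith+
  then have "\<bar>1 - s\<bar> \<le> 7/200"
    using abs_one_minus_sqrt_le[OF d_bounds(3)] abs_leI[OF d_bounds(1,2)] unfolding s_def by linarith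
  moreover have "\<bar>1 + y - s\<bar> \<le> \<bar>y\<bar> + \<bar>1 - s\<bar>" using abs_triangle_ineq[of y "1 - s"] by simp
  ultimately have "\<bar>1 + y - s\<bar> \<le> 1/25" using y by linarith
  then have x_small: "\<bar>x\<bar> \<le> 1/100" unfolding x_def by simp
  have "s\<^sup>2 = d" unfolding s_def using d_bounds(3) by simp
  then have quadratic: "2 * x\<^sup>2 - (1 + y) * x + y = 0"
    unfolding x_def d_def by (simp add: power2_eq_square field_simps)
  define u where "u = (1 - 2 * x) / (1 - x)"
  have "0 < 1 - x" using x_small by (simp add: abs_le_iff)
  have u: "\<bar>u\<bar> \<le> 2"
    unfolding u_def using x_small \<open>0 < 1 - x\<close> by (simp add: abs_le_iff field_simps)
  have "u * x * (1 - x) = (1 - 2 * x) * x"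
    unfolding u_def using \<open>0 < 1 - x\<close> by (simp add: field_simps)
  also have "\<dots> = y * (1 - x)" using quadratic by (simp add: algebra_simps power2_eq_square)
  finally have "u * x = y" using \<open>0 < 1 - x\<close> by simp
  have kernel: "(1 - u) - (2 - u) * x = 0"
    unfolding u_def using \<open>0 < 1 - x\<close> by (simp add: field_simps)
  have "\<bar>x\<bar> < 1/96" using x_small by simp
  from gf_functional_equation[OF this u]
  have "(1 - u) * u * x * (1 - x) - u * x * gf (u * x) 1 = 0"
    unfolding kernel by (metis mult_zero_right)
  then have "y * ((1 - u) * (1 - x) - gf y 1) = 0"
    unfolding \<open>u * x = y\<close>[symmetric] by (simp add: algebra_simps)
  then have "gf y 1 = (1 - u) * (1 - x)" using False by simp
  also have "\<dots> = x" unfolding u_def using \<open>0 < 1 - x\<close> by (simp add: field_simps)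
  finally show ?thesis unfolding x_def s_def d_def .
qed

lemma sums_closed_form:
  "\<exists>\<epsilon> > 0. \<forall>x u :: real. \<bar>x\<bar> < \<epsilon> \<and> \<bar>u\<bar> < \<epsilon> \<longrightarrow>
     (\<lambda>n. \<Sum>l = 1..n. real (a n l) * u ^ l * x ^ n) sums
     (u * x * (4 * u - 3 + 4 * x - 3 * u * x - sqrt (1 - 6 * u * x + u\<^sup>2 * x\<^sup>2))
       / (4 * (u - 1 - u * x + 2 * x)))"
proof (intro exI[of _ "1/200"] conjI allI impI)
  fix x u :: real
  assume "\<bar>x\<bar> < 1/200 \<and> \<bar>u\<bar> < 1/200"
  then have x: "\<bar>x\<bar> < 1/200" and u: "\<bar>u\<bar> < 1/200" by simp_all
  define S where "S = sqrt (1 - 6 * u * x + u\<^sup>2 * x\<^sup>2)"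
  have "\<bar>u * x\<bar> \<le> 1/200"
    using mult_mono[of "\<bar>u\<bar>" 1 "\<bar>x\<bar>" "1/200"] x u by (simp add: abs_mult)
  from gf_at_one[OF this] have gf_ux: "gf (u * x) 1 = (1 + u * x - S) / 4"
    unfolding S_def by (simp add: power_mult_distrib mult.assoc)
  have "\<bar>(2 - u) * x\<bar> \<le> 3 * (1/200)"
    using mult_mono[of "\<bar>2 - u\<bar>" 3 "\<bar>x\<bar>" "1/200"] x u by (simp add: abs_mult)
  then have kernel_pos: "0 < (1 - u) - (2 - u) * x" using u by (simp add: abs_le_iff abs_less_iff)
  have "gf x u = ((1 - u) * u * x * (1 - x) - u * x * gf (u * x) 1) / ((1 - u) - (2 - u) * x)"
    using gf_functional_equation[of x u] x u kernel_pos by (intro eq_divide_imp) auto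
  also have "\<dots> = u * x * (4 * u - 3 + 4 * x - 3 * u * x - S) / (4 * (u - 1 - u * x + 2 * x))"
    unfolding gf_ux using kernel_pos by (simp add: field_simps)
  finally have closed: "gf x u = u * x * (4 * u - 3 + 4 * x - 3 * u * x - S) / (4 * (u - 1 - u * x + 2 * x))" .
  have "(\<lambda>n. row n u * x ^ n) sums gf x u"
    using summable_row[of u x] x u unfolding gf_def by (simp add: summable_sums)
  then show "(\<lambda>n. \<Sum>l = 1..n. real (a n l) * u ^ l * x ^ n) sums
      (u * x * (4 * u - 3 + 4 * x - 3 * u * x - sqrt (1 - 6 * u * x + u\<^sup>2 * x\<^sup>2))
        / (4 * (u - 1 - u * x + 2 * x)))"
    unfolding closed S_def by (simp add: row_def sum_distrib_right)
qed simp

end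

lemma sind_recurrence_a_sind: "sind_recurrence a_sind"
proof
  show "a_sind n n = 0" if "2 \<le> n" for n
    using A_sind_diag_empty[OF that] by (simp add: a_sind_def)
qed (use a_sind_1_1 a_sind_2_1 a_sind_recurrence in auto)

theorem proposition3p1:
  shows "a_sind 1 1 = 1 \<and> a_sind 2 1 = 1 \<and>
    (\<forall>n \<ge> 3. \<forall>l. 1 \<le> l \<and> l \<le> n - 1 \<longrightarrow>
        a_sind n l = 2 * a_sind (n - 1) l + (\<Sum>j = 1..l - 1. a_sind (n - 1) j)) \<and>
    (\<exists>\<epsilon> > 0. \<forall>x u :: real. \<bar>x\<bar> < \<epsilon> \<and> \<bar>u\<bar> < \<epsilon> \<longrightarrow>
        (\<lambda>n. \<Sum>l = 1..n. real (a_sind n l) * u ^ l * x ^ n) sums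
        (u * x * (4 * u - 3 + 4 * x - 3 * u * x - sqrt (1 - 6 * u * x + u\<^sup>2 * x\<^sup>2))
          / (4 * (u - 1 - u * x + 2 * x))))"
  using a_sind_1_1 a_sind_2_1 a_sind_recurrence sind_recurrence.sums_closed_form[OF sind_recurrence_a_sind]
  by blast

end
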